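(* Fix $K\ge2$. For $\theta>0$ let $V_1,\dots,V_{K-1}$ be independent with $V_i\sim\mathrm{Beta}(\frac\theta K+1,(K-i)\frac\theta K)$, and set $Y_1^K=V_1$, $Y_i^K=(1-V_1)\cdots(1-V_{i-1})V_i$ for $2\le i\le K-1$. Then, as $\theta\to\infty$, the family of laws of $(Y_1^K,\dots,Y_{K-1}^K)$ satisfies an LDP on $\Delta_{K-1}=\{(y_1,\dots,y_{K-1}):y_i\ge0,\ \sum_i y_i\le1\}$ with speed $\theta$ and rate function $$S^K(y_1,\dots,y_{K-1})=\sum_{i=1}^{K-1}\Big[\frac1K\log\frac{1-\sum_{l=1}^{i-1}y_l}{y_i}+\frac{K-i}{K}\log\frac{1-\sum_{l=1}^{i-1}y_l}{1-\sum_{l=1}^{i}y_l}\Big]+\sum_{i=1}^{K-1}\Big[\frac1K\log\frac1{K+1-i}+\frac{K-i}K\log\frac{K-i}{K+1-i}\Big].$$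
   Context: $(Y_1^K,\dots,Y_{K-1}^K)$ is the size-biased sampling of a symmetric $\mathrm{Dirichlet}(\theta/K,\dots,\theta/K)$ distribution. Empty sums are $0$; logarithms of expressions with zero denominator are interpreted as $+\infty$ (the rate function takes value $+\infty$ there). An LDP with speed $\theta$ uses normalization $\theta^{-1}\log$ as $\theta\to\infty$. *)

theory Defs
  imports "HOL-Probability.Probability"
begin

definition beta_density :: "real \<Rightarrow> real \<Rightarrow> real \<Rightarrow> real" where
  "beta_density a b x =
     indicator {0<..<1} x * x powr (a - 1) * (1 - x) powr (b - 1) / Beta a b"

definition beta_measure :: "real \<Rightarrow> real \<Rightarrow> real measure" where
  "beta_measure a b = density lborel (\<lambda>x. ennreal (beta_density a b x))"

text \<open>Stick-breaking map (0-based indices): Y j = (prod_{l<j} (1 - V l)) * V j, j < K-1.\<close>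
definition stick_break :: "nat \<Rightarrow> (nat \<Rightarrow> real) \<Rightarrow> (nat \<Rightarrow> real)" where
  "stick_break K v = restrict (\<lambda>j. (\<Prod>l<j. 1 - v l) * v j) {..<K-1}"

text \<open>Law of (Y_1^K,...,Y_{K-1}^K) for parameter theta: V_{j+1} ~ Beta(theta/K+1, (K-1-j) theta/K),
  independent (product measure).\<close>
definition law_Y :: "nat \<Rightarrow> real \<Rightarrow> (nat \<Rightarrow> real) measure" where
  "law_Y K \<theta> = distr
     (PiM {..<K-1} (\<lambda>j. beta_measure (\<theta> / real K + 1) (real (K - 1 - j) * \<theta> / real K)))
     (PiM {..<K-1} (\<lambda>_. borel)) (stick_break K)"

definition Delta_simplex :: "nat \<Rightarrow> (nat \<Rightarrow> real) set" where
  "Delta_simplex K = {y. y \<in> extensional {..<K-1} \<and> (\<forall>i<K-1. 0 \<le> y i) \<and> (\<Sum>i<K-1. y i) \<le> 1}"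

definition elog :: "real \<Rightarrow> real \<Rightarrow> ereal" where
  "elog a b = (if b = 0 then \<infinity> else ereal (ln (a / b)))"

definition log_prob :: "real \<Rightarrow> ereal" where
  "log_prob p = (if p = 0 then -\<infinity> else ereal (ln p))"

definition rate_S :: "nat \<Rightarrow> (nat \<Rightarrow> real) \<Rightarrow> ereal" where
  "rate_S K y =
     (\<Sum>i<K-1. ereal (1 / real K) * elog (1 - (\<Sum>l<i. y l)) (y i)
              + ereal (real (K - 1 - i) / real K) * elog (1 - (\<Sum>l<i. y l)) (1 - (\<Sum>l\<le>i. y l)))
   + ereal (\<Sum>i<K-1. 1 / real K * ln (1 / real (K - i))
              + real (K - 1 - i) / real K * ln (real (K - 1 - i) / real (K - i)))"

definition LDP :: "'a::topological_space set \<Rightarrow> (real \<Rightarrow> 'a measure) \<Rightarrow> ('a \<Rightarrow> ereal) \<Rightarrow> bool" where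
  "LDP X P I \<longleftrightarrow>
     (\<forall>x\<in>X. 0 \<le> I x) \<and>
     (\<forall>c. closedin (top_of_set X) {x \<in> X. I x \<le> c}) \<and>
     (\<forall>F. closedin (top_of_set X) F \<longrightarrow>
        Limsup at_top (\<lambda>\<theta>. log_prob (measure (P \<theta>) F) / ereal \<theta>) \<le> - (INF x\<in>F. I x)) \<and>
     (\<forall>G. openin (top_of_set X) G \<longrightarrow>
        - (INF x\<in>G. I x) \<le> Liminf at_top (\<lambda>\<theta>. log_prob (measure (P \<theta>) G) / ereal \<theta>))"

end

theory Submission
  imports Defs
begin

(* On the open cube (0,1)^(K-1) the stick-breaking map is a homeomorphism onto the interior
   of the simplex, and there the rate function splits as S^K(stick v) = \<Sum>i R_i(v_i), where
   R_i is the rate of the i-th factor Beta(\<theta>/K+1, (K-1-i)\<theta>/K): up to the normalising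
   constant, its density is x^(\<theta>/K) (1-x)^((K-1-i)\<theta>/K-1) = exp(-\<theta> R_i(x) + \<theta> c_i + O(1)),
   and Laplace's method gives ln Beta = \<theta> c_i + o(\<theta>).
   The upper bound is an exponential Chebyshev estimate for the independent factors; the lower
   bound comes from a small box around the stick-breaking preimage of an interior point.
   Boundary points of the simplex have infinite rate, and the lower semicontinuity of S^K
   there holds because one of its logarithms blows up near them. *)

section \<open>The rate of a single stick fraction\<close>

definition stick_rate_const :: "nat \<Rightarrow> nat \<Rightarrow> real" where
  "stick_rate_const K i =
     1 / real K * ln (1 / real (K - i)) + real (K - 1 - i) / real K * ln (real (K - 1 - i) / real (K - i))"

(* stick_rate_const K i is the maximum of ln x / K + (K-1-i)/K * ln (1-x), attained at
   x = 1/(K-i); hence stick_rate K i is nonnegative with minimum 0 there. *)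
definition stick_rate :: "nat \<Rightarrow> nat \<Rightarrow> real \<Rightarrow> real" where
  "stick_rate K i p =
     1 / real K * ln (1 / p) + real (K - 1 - i) / real K * ln (1 / (1 - p)) + stick_rate_const K i"

lemma stick_rate_minus_const:
  assumes "0 < x" "x < 1"
  shows "stick_rate K i x - stick_rate_const K i =
           - (1 / real K) * ln x - real (K - 1 - i) / real K * ln (1 - x)"
  using assms unfolding stick_rate_def by (simp add: ln_div)

lemma stick_rate_nonneg:
  assumes "i < K - 1" "0 < p" "p < 1"
  shows "0 \<le> stick_rate K i p"
proof -
  define k where "k = real (K - i)"
  define b where "b = real (K - 1 - i)"
  have bk: "b = k - 1" "b \<ge> 1" "k \<ge> 2" using assms(1) by (auto simp: k_def b_def of_nat_diff)
  have K: "real K > 0" using assms(1) by auto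
  have scaled: "real K * stick_rate K i p = - ln (k * p) - b * ln (k * (1 - p) / b)"
  proof -
    have "ln (k * (1 - p) / b) = ln k + ln (1 - p) - ln b"
      using assms bk by (simp add: ln_div ln_mult)
    moreover have "ln (k * p) = ln k + ln p" using assms bk by (simp add: ln_mult)
    moreover have "ln (b / k) = ln b - ln k" using bk by (simp add: ln_div)
    ultimately show ?thesis
      unfolding stick_rate_def stick_rate_const_def k_def[symmetric] b_def[symmetric]
      using K assms bk by (simp add: field_simps ln_div)
  qed
  \<comment> \<open>Two applications of \<open>ln t \<le> t - 1\<close>, whose right-hand sides cancel.\<close>
  have "ln (k * p) \<le> k * p - 1" using assms bk by (intro ln_le_minus_one) auto
  moreover have "b * ln (k * (1 - p) / b) \<le> b * (k * (1 - p) / b - 1)"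
    using assms bk by (intro mult_left_mono ln_le_minus_one) auto
  moreover have "b * (k * (1 - p) / b - 1) = k - k * p - b" using bk by (simp add: field_simps)
  ultimately have "0 \<le> real K * stick_rate K i p"
    unfolding scaled using bk by linarith
  then show ?thesis using K by (simp add: zero_le_mult_iff)
qed

lemma stick_rate_at_minimum:
  assumes "i < K - 1"
  shows "stick_rate K i (1 / real (K - i)) = 0"
proof -
  define k where "k = real (K - i)"
  have k: "k \<ge> 2" "real (K - 1 - i) = k - 1" using assms by (auto simp: k_def of_nat_diff)
  have "1 - 1 / k = (k - 1) / k" using k by (simp add: field_simps)
  then show ?thesis unfolding stick_rate_def stick_rate_const_def k_def[symmetric] k(2)
    using k by (simp add: ln_div field_simps)
qed

lemma tendsto_stick_rate:
  assumes "0 < p" "p < 1"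
  shows "(stick_rate K i \<longlongrightarrow> stick_rate K i p) (nhds p)"
proof -
  have "((\<lambda>x. stick_rate K i x) \<longlongrightarrow> stick_rate K i p) (nhds p)"
    unfolding stick_rate_def using assms by (intro tendsto_intros) (auto intro: filterlim_ident)
  then show ?thesis by simp
qed


lemma borel_measurable_stick_rate[measurable]: "stick_rate K i \<in> borel_measurable borel"
  unfolding stick_rate_def by measurable


section \<open>The rate function on the simplex\<close>

definition rate_term :: "nat \<Rightarrow> (nat \<Rightarrow> real) \<Rightarrow> nat \<Rightarrow> ereal" where
  "rate_term K y i =
     ereal (1 / real K) * elog (1 - (\<Sum>l<i. y l)) (y i)
     + ereal (real (K - 1 - i) / real K) * elog (1 - (\<Sum>l<i. y l)) (1 - (\<Sum>l\<le>i. y l))"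

lemma rate_S_eq_sum_rate_term:
  "rate_S K y = (\<Sum>i<K-1. rate_term K y i) + ereal (\<Sum>i<K-1. stick_rate_const K i)"
  unfolding rate_S_def rate_term_def stick_rate_const_def by simp

lemma sum_atMost_eq_sum_lessThan_plus:
  fixes f :: "nat \<Rightarrow> 'a::comm_monoid_add"
  shows "(\<Sum>l\<le>i. f l) = (\<Sum>l<i. f l) + f i"
  using sum.lessThan_Suc[of f i] by (simp add: lessThan_Suc_atMost)

lemma Delta_simplex_partial_sum_le:
  assumes "y \<in> Delta_simplex K" "i < K - 1"
  shows "(\<Sum>l\<le>i. y l) \<le> 1"
proof -
  have "(\<Sum>l\<le>i. y l) \<le> (\<Sum>l<K-1. y l)"
    using assms by (intro sum_mono2) (auto simp: Delta_simplex_def)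
  then show ?thesis using assms by (auto simp: Delta_simplex_def)
qed

lemma elog_partial_sums_nonneg:
  assumes "y \<in> Delta_simplex K" "i < K - 1"
  shows "0 \<le> elog (1 - (\<Sum>l<i. y l)) (y i)"
    and "0 \<le> elog (1 - (\<Sum>l<i. y l)) (1 - (\<Sum>l\<le>i. y l))"
proof -
  have "0 \<le> y i" using assms by (auto simp: Delta_simplex_def)
  moreover have "(\<Sum>l\<le>i. y l) \<le> 1" by (rule Delta_simplex_partial_sum_le[OF assms])
  ultimately show "0 \<le> elog (1 - (\<Sum>l<i. y l)) (y i)"
    and "0 \<le> elog (1 - (\<Sum>l<i. y l)) (1 - (\<Sum>l\<le>i. y l))"
    unfolding elog_def sum_atMost_eq_sum_lessThan_plus by (auto simp: field_simps)
qed

lemma ereal_mult_nonneg: "0 \<le> c \<Longrightarrow> 0 \<le> x \<Longrightarrow> 0 \<le> ereal c * x"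
  by (cases x) auto

lemma rate_term_ge_summands:
  assumes "y \<in> Delta_simplex K" "i < K - 1"
  shows "ereal (1 / real K) * elog (1 - (\<Sum>l<i. y l)) (y i) \<le> rate_term K y i"
    and "ereal (real (K - 1 - i) / real K) * elog (1 - (\<Sum>l<i. y l)) (1 - (\<Sum>l\<le>i. y l))
           \<le> rate_term K y i"
  unfolding rate_term_def
  using elog_partial_sums_nonneg[OF assms]
  by (auto intro: add_increasing add_increasing2 ereal_mult_nonneg)

lemma rate_term_nonneg: "y \<in> Delta_simplex K \<Longrightarrow> i < K - 1 \<Longrightarrow> 0 \<le> rate_term K y i"
  unfolding rate_term_def using elog_partial_sums_nonneg
  by (intro add_nonneg_nonneg ereal_mult_nonneg) auto

lemma rate_term_le_rate_S:
  assumes y: "y \<in> Delta_simplex K" and j: "j < K - 1"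
  shows "rate_term K y j + ereal (\<Sum>i<K-1. stick_rate_const K i) \<le> rate_S K y"
proof -
  have "rate_term K y j \<le> rate_term K y j + (\<Sum>i\<in>{..<K-1} - {j}. rate_term K y i)"
    using rate_term_nonneg[OF y] by (intro add_increasing2 sum_nonneg) auto
  also have "\<dots> = (\<Sum>i<K-1. rate_term K y i)"
    using j by (simp add: sum.remove)
  finally show ?thesis unfolding rate_S_eq_sum_rate_term by (rule add_right_mono)
qed

definition in_open_simplex :: "nat \<Rightarrow> (nat \<Rightarrow> real) \<Rightarrow> bool" where
  "in_open_simplex K y \<longleftrightarrow> (\<forall>i<K-1. 0 < y i \<and> 0 < 1 - (\<Sum>l\<le>i. y l))"

(* Inverse of stick_break on the open simplex. *)
definition stick_fraction :: "(nat \<Rightarrow> real) \<Rightarrow> nat \<Rightarrow> real" where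
  "stick_fraction y i = y i / (1 - (\<Sum>l<i. y l))"

lemma in_open_simplex_stick_fraction:
  assumes "in_open_simplex K y" "i < K - 1"
  shows "0 < 1 - (\<Sum>l<i. y l)" "0 < stick_fraction y i" "stick_fraction y i < 1"
proof -
  have "0 < y i" and "0 < 1 - (\<Sum>l<i. y l) - y i"
    using assms unfolding in_open_simplex_def sum_atMost_eq_sum_lessThan_plus by auto
  then show "0 < 1 - (\<Sum>l<i. y l)" "0 < stick_fraction y i" "stick_fraction y i < 1"
    by (auto simp: stick_fraction_def field_simps)
qed

lemma rate_term_open_simplex:
  assumes "in_open_simplex K y" "i < K - 1"
  shows "rate_term K y i = ereal (stick_rate K i (stick_fraction y i) - stick_rate_const K i)"
proof -
  define A where "A = 1 - (\<Sum>l<i. y l)"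
  have yi: "0 < y i" and rest: "0 < A - y i"
    using assms unfolding in_open_simplex_def A_def sum_atMost_eq_sum_lessThan_plus by auto
  have "1 / (y i / A) = A / y i" by simp
  moreover have "1 / (1 - y i / A) = A / (A - y i)" using yi rest by (simp add: field_simps)
  moreover have "1 - (\<Sum>l\<le>i. y l) = A - y i" by (simp add: A_def sum_atMost_eq_sum_lessThan_plus)
  ultimately show ?thesis
    unfolding rate_term_def stick_fraction_def A_def[symmetric] stick_rate_def elog_def
    using yi rest by simp
qed

lemma rate_S_open_simplex:
  assumes "in_open_simplex K y"
  shows "rate_S K y = ereal (\<Sum>i<K-1. stick_rate K i (stick_fraction y i))"
proof -
  have "(\<Sum>i<K-1. rate_term K y i)
      = ereal (\<Sum>i<K-1. stick_rate K i (stick_fraction y i) - stick_rate_const K i)"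
    using rate_term_open_simplex[OF assms] by simp
  then show ?thesis unfolding rate_S_eq_sum_rate_term by (simp add: sum_subtractf)
qed

(* At the first index where y leaves the open simplex, the remaining stick is still positive,
   so one of the two logarithms in the rate term has a positive numerator and zero denominator. *)
lemma Delta_simplex_boundary_index:
  assumes y: "y \<in> Delta_simplex K" and "\<not> in_open_simplex K y"
  obtains i where "i < K - 1" "0 < 1 - (\<Sum>l<i. y l)" "y i = 0 \<or> 1 - (\<Sum>l\<le>i. y l) = 0"
proof -
  define P where "P i \<longleftrightarrow> i < K - 1 \<and> \<not> (0 < y i \<and> 0 < 1 - (\<Sum>l\<le>i. y l))" for i
  have "\<exists>i. P i" using assms(2) unfolding in_open_simplex_def P_def by auto
  then obtain i where i: "P i" and least: "\<And>l. l < i \<Longrightarrow> \<not> P l"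
    using exists_least_iff by metis
  have i1: "i < K - 1" using i by (simp add: P_def)
  have "0 < 1 - (\<Sum>l<i. y l)"
  proof (cases i)
    case (Suc m)
    have "(\<Sum>l<i. y l) = (\<Sum>l\<le>m. y l)" using Suc by (simp add: lessThan_Suc_atMost)
    moreover have "\<not> P m" using least Suc by auto
    ultimately show ?thesis using Suc i1 by (auto simp: P_def)
  qed simp
  moreover have "0 \<le> y i" "(\<Sum>l\<le>i. y l) \<le> 1"
    using y i1 Delta_simplex_partial_sum_le[OF y i1] by (auto simp: Delta_simplex_def)
  ultimately show ?thesis using that[OF i1] i by (auto simp: P_def)
qed

lemma rate_S_boundary:
  assumes y: "y \<in> Delta_simplex K" and "\<not> in_open_simplex K y"
  shows "rate_S K y = \<infinity>"
proof -
  obtain i where i: "i < K - 1" "0 < 1 - (\<Sum>l<i. y l)" "y i = 0 \<or> 1 - (\<Sum>l\<le>i. y l) = 0"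
    using Delta_simplex_boundary_index[OF assms] .
  define c where "c = real (K - 1 - i) / real K"
  have "0 < 1 / real K" "0 < c" using i(1) by (auto simp: c_def)
  then have "\<infinity> \<le> rate_term K y i"
    using i(3) rate_term_ge_summands[OF y i(1), folded c_def] by (cases "y i = 0") (auto simp: elog_def)
  then have "rate_term K y i = \<infinity>" by simp
  then have "(\<Sum>i<K-1. rate_term K y i) = \<infinity>"
    using i(1) by (subst sum_Pinfty) auto
  then show ?thesis unfolding rate_S_eq_sum_rate_term by simp
qed

lemma rate_S_nonneg:
  assumes "y \<in> Delta_simplex K"
  shows "0 \<le> rate_S K y"
proof (cases "in_open_simplex K y")
  case True
  then show ?thesis unfolding rate_S_open_simplex[OF True]
    using in_open_simplex_stick_fraction[OF True] by (auto intro!: sum_nonneg stick_rate_nonneg)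
qed (simp add: rate_S_boundary[OF assms])


section \<open>Stick breaking\<close>

lemma one_minus_sum_stick_break:
  assumes "j \<le> K - 1"
  shows "1 - (\<Sum>l<j. stick_break K v l) = (\<Prod>l<j. 1 - v l)"
proof -
  have "1 - (\<Sum>l<j. (\<Prod>m<l. 1 - v m) * v l) = (\<Prod>l<j. 1 - v l)" for j
    by (induction j) (simp_all add: algebra_simps)
  moreover have "(\<Sum>l<j. stick_break K v l) = (\<Sum>l<j. (\<Prod>m<l. 1 - v m) * v l)"
    using assms by (intro sum.cong) (auto simp: stick_break_def)
  ultimately show ?thesis by simp
qed

lemma stick_break_open_simplex:
  assumes v: "v \<in> {..<K-1} \<rightarrow> {0<..<1}"
  shows "stick_break K v \<in> Delta_simplex K" "in_open_simplex K (stick_break K v)"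
    "\<And>i. i < K - 1 \<Longrightarrow> stick_fraction (stick_break K v) i = v i"
proof -
  let ?y = "stick_break K v"
  have v_i: "0 < v i" "v i < 1" if "i < K - 1" for i
    using v that by (auto simp: Pi_iff)
  have rest: "0 < (\<Prod>l<j. 1 - v l)" if "j \<le> K - 1" for j
    using that v_i by (intro prod_pos) auto
  have yi: "?y i = (\<Prod>l<i. 1 - v l) * v i" if "i < K - 1" for i
    using that by (simp add: stick_break_def)
  have pos: "0 < ?y i" if "i < K - 1" for i
    using that rest[of i] v_i yi[of i] by auto
  have "(\<Sum>l<K-1. ?y l) \<le> 1"
    using one_minus_sum_stick_break[of "K-1" K v] rest[of "K-1"] by simp
  then show "?y \<in> Delta_simplex K"
    unfolding Delta_simplex_def using pos by (auto simp: stick_break_def less_imp_le)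
  show "in_open_simplex K ?y"
    unfolding in_open_simplex_def
  proof (intro allI impI conjI)
    fix i assume i: "i < K - 1"
    then show "0 < ?y i" by (rule pos)
    show "0 < 1 - (\<Sum>l\<le>i. ?y l)"
      using one_minus_sum_stick_break[of "Suc i" K v] rest[of "Suc i"] i
      unfolding lessThan_Suc_atMost by simp
  qed
  show "stick_fraction ?y i = v i" if "i < K - 1" for i
  proof -
    have "1 - (\<Sum>l<i. ?y l) = (\<Prod>l<i. 1 - v l)" using that by (intro one_minus_sum_stick_break) simp
    moreover have "(\<Prod>l<i. 1 - v l) \<noteq> 0" using rest[of i] that by linarith
    ultimately show ?thesis
      unfolding stick_fraction_def yi[OF that] by simp
  qed
qed

lemma rate_S_stick_break:
  assumes "v \<in> {..<K-1} \<rightarrow> {0<..<1}"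
  shows "rate_S K (stick_break K v) = ereal (\<Sum>i<K-1. stick_rate K i (v i))"
  using stick_break_open_simplex[OF assms] by (simp add: rate_S_open_simplex)

lemma stick_break_onto_open_simplex:
  assumes y: "y \<in> Delta_simplex K" and I: "in_open_simplex K y"
  obtains v where "v \<in> {..<K-1} \<rightarrow>\<^sub>E {0<..<1}" "stick_break K v = y"
proof
  define v where "v = restrict (stick_fraction y) {..<K-1}"
  show "v \<in> {..<K-1} \<rightarrow>\<^sub>E {0<..<1}"
    using in_open_simplex_stick_fraction[OF I] by (auto simp: v_def)
  have rest: "(\<Prod>l<j. 1 - v l) = 1 - (\<Sum>l<j. y l)" if "j \<le> K - 1" for j
    using that
  proof (induction j)
    case (Suc j)
    then have "(\<Prod>l<Suc j. 1 - v l) = (1 - (\<Sum>l<j. y l)) * (1 - stick_fraction y j)"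
      by (simp add: v_def)
    also have "\<dots> = 1 - (\<Sum>l<Suc j. y l)"
      using in_open_simplex_stick_fraction(1)[OF I, of j] Suc by (simp add: stick_fraction_def field_simps)
    finally show ?case .
  qed simp
  show "stick_break K v = y"
  proof
    fix j
    show "stick_break K v j = y j"
    proof (cases "j < K - 1")
      case True
      then show ?thesis using rest[of j] in_open_simplex_stick_fraction(1)[OF I True]
        by (simp add: stick_break_def v_def stick_fraction_def)
    next
      case False
      then show ?thesis using y by (auto simp: stick_break_def Delta_simplex_def extensional_def)
    qed
  qed
qed

lemma continuous_on_stick_break: "continuous_on UNIV (stick_break K)"
proof (rule continuous_on_coordinatewise_then_product)
  fix j
  show "continuous_on UNIV (\<lambda>w. stick_break K w j)"
    by (cases "j < K - 1") (auto simp: stick_break_def intro!: continuous_intros)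
qed


section \<open>Lower semicontinuity of the rate function\<close>

lemma tendsto_component: "((\<lambda>z. z i) \<longlongrightarrow> y i) (nhds y)"
  using continuous_on_product_coordinates[of i]
  by (metis continuous_on_def iso_tuple_UNIV_I tendsto_at_iff_tendsto_nhds)

lemma closed_Delta_simplex: "closed (Delta_simplex K)"
proof -
  have "Delta_simplex K =
      (\<Inter>i. {y. if i < K - 1 then 0 \<le> y i else y i = undefined}) \<inter> {y. (\<Sum>i<K-1. y i) \<le> 1}"
    unfolding Delta_simplex_def extensional_def by auto
  moreover have "closed {y::nat\<Rightarrow>real. if i < K - 1 then 0 \<le> y i else y i = undefined}" for i
    by (cases "i < K - 1") (auto intro!: closed_Collect_le closed_Collect_eq continuous_intros)
  moreover have "closed {y::nat\<Rightarrow>real. (\<Sum>i<K-1. y i) \<le> 1}"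
    by (intro closed_Collect_le continuous_intros) auto
  ultimately show ?thesis by (simp add: closed_Int closed_INT)
qed

lemma eventually_elog_gt:
  assumes c: "c > 0" and a: "a > 0" and A: "(A \<longlongrightarrow> a) F" and B: "(B \<longlongrightarrow> 0) F"
    and B_nonneg: "eventually (\<lambda>z. 0 \<le> B z) F"
  shows "eventually (\<lambda>z. ereal M < ereal c * elog (A z) (B z)) F"
proof -
  define \<delta> where "\<delta> = a / 2 * exp (- M / c)"
  have \<delta>: "\<delta> > 0" using a by (simp add: \<delta>_def)
  have "eventually (\<lambda>z. a / 2 < A z) F" using A a by (intro order_tendstoD) auto
  moreover have "eventually (\<lambda>z. B z < \<delta>) F" using B \<delta> by (intro order_tendstoD) auto
  ultimately show ?thesis using B_nonneg
  proof eventually_elim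
    case (elim z)
    show ?case
    proof (cases "B z = 0")
      case False
      then have "0 < B z" using elim by auto
      then have "ln (a / 2 / \<delta>) < ln (A z / B z)"
        using elim \<delta> a by (intro ln_less_cancel_iff[THEN iffD2] frac_less2) auto
      moreover have "ln (a / 2 / \<delta>) = M / c" using a c by (simp add: \<delta>_def ln_div ln_mult)
      ultimately have "M / c < ln (A z / B z)" by simp
      then have "M < c * ln (A z / B z)" using c by (simp add: field_simps)
      then show ?thesis using False by (simp add: elog_def)
    qed (use c in \<open>simp add: elog_def\<close>)
  qed
qed

lemma eventually_in_open_simplex:
  assumes "in_open_simplex K y"
  shows "eventually (in_open_simplex K) (nhds y)"
proof -
  have "eventually (\<lambda>z. 0 < z i \<and> 0 < 1 - (\<Sum>l\<le>i. z l)) (nhds y)" if "i < K - 1" for i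
  proof -
    have y: "0 < y i" "0 < 1 - (\<Sum>l\<le>i. y l)" using assms that by (auto simp: in_open_simplex_def)
    have "((\<lambda>z. 1 - (\<Sum>l\<le>i. z l)) \<longlongrightarrow> 1 - (\<Sum>l\<le>i. y l)) (nhds y)"
      by (intro tendsto_intros tendsto_component)
    from order_tendstoD(1)[OF this y(2)] order_tendstoD(1)[OF tendsto_component[of i y] y(1)]
    show ?thesis by eventually_elim auto
  qed
  then have "eventually (\<lambda>z. \<forall>i\<in>{..<K-1}. 0 < z i \<and> 0 < 1 - (\<Sum>l\<le>i. z l)) (nhds y)"
    by (intro eventually_ball_finite) auto
  then show ?thesis by eventually_elim (auto simp: in_open_simplex_def)
qed

lemma rate_S_lsc_open_simplex:
  assumes I: "in_open_simplex K y" and r: "ereal r < rate_S K y"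
  shows "eventually (\<lambda>z. ereal r < rate_S K z) (nhds y)"
proof -
  define J where "J z = (\<Sum>i<K-1. stick_rate K i (stick_fraction z i))" for z
  have "(J \<longlongrightarrow> J y) (nhds y)"
    unfolding J_def stick_fraction_def stick_rate_def
  proof (intro tendsto_intros tendsto_component)
    fix i assume "i \<in> {..<K-1}"
    then show "1 - (\<Sum>l<i. y l) \<noteq> 0" "y i / (1 - (\<Sum>l<i. y l)) \<noteq> 0"
      "1 / (y i / (1 - (\<Sum>l<i. y l))) \<noteq> 0" "1 - y i / (1 - (\<Sum>l<i. y l)) \<noteq> 0"
      "1 / (1 - y i / (1 - (\<Sum>l<i. y l))) \<noteq> 0"
      using in_open_simplex_stick_fraction[OF I, of i] by (auto simp: stick_fraction_def)
  qed (use in_open_simplex_stick_fraction(1)[OF I] in fastforce)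
  then have "eventually (\<lambda>z. r < J z) (nhds y)"
    by (rule order_tendstoD(1)) (use r rate_S_open_simplex[OF I] in \<open>simp add: J_def\<close>)
  with eventually_in_open_simplex[OF I] show ?thesis
    by eventually_elim (simp add: rate_S_open_simplex J_def)
qed

lemma rate_S_lsc_boundary:
  assumes y: "y \<in> Delta_simplex K" and B: "\<not> in_open_simplex K y"
  shows "eventually (\<lambda>z. ereal r < rate_S K z) (inf (nhds y) (principal (Delta_simplex K)))"
    (is "eventually _ ?F")
proof -
  define C where "C = (\<Sum>i<K-1. stick_rate_const K i)"
  obtain i where i: "i < K - 1" "0 < 1 - (\<Sum>l<i. y l)" "y i = 0 \<or> 1 - (\<Sum>l\<le>i. y l) = 0"
    using Delta_simplex_boundary_index[OF assms] .
  have in_Delta: "eventually (\<lambda>z. z \<in> Delta_simplex K) ?F"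
    by (simp add: eventually_inf_principal)
  have rest: "((\<lambda>z. 1 - (\<Sum>l\<in>A. z l)) \<longlongrightarrow> 1 - (\<Sum>l\<in>A. y l)) ?F" for A
    by (rule tendsto_mono[OF inf_le1]) (intro tendsto_intros tendsto_component)
  have "eventually (\<lambda>z. ereal (r - C) < rate_term K z i) ?F"
  proof (cases "y i = 0")
    case True
    have "((\<lambda>z. z i) \<longlongrightarrow> 0) ?F"
      using tendsto_mono[OF inf_le1 tendsto_component[of i y]] True by simp
    moreover have "eventually (\<lambda>z. 0 \<le> z i) ?F"
      using in_Delta by eventually_elim (use i in \<open>auto simp: Delta_simplex_def\<close>)
    ultimately have "eventually (\<lambda>z. ereal (r - C) < ereal (1 / real K) * elog (1 - (\<Sum>l<i. z l)) (z i)) ?F"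
      using i by (intro eventually_elog_gt[OF _ i(2) rest]) auto
    with in_Delta show ?thesis
    proof eventually_elim
      case (elim z)
      show ?case using elim(2) rate_term_ge_summands(1)[OF elim(1) i(1)] by (rule less_le_trans)
    qed
  next
    case False
    then have "((\<lambda>z. 1 - (\<Sum>l\<le>i. z l)) \<longlongrightarrow> 0) ?F"
      using rest[of "{..i}"] i(3) by simp
    moreover have "eventually (\<lambda>z. 0 \<le> 1 - (\<Sum>l\<le>i. z l)) ?F"
      using in_Delta by eventually_elim (use Delta_simplex_partial_sum_le i in auto)
    ultimately have "eventually (\<lambda>z. ereal (r - C) <
        ereal (real (K - 1 - i) / real K) * elog (1 - (\<Sum>l<i. z l)) (1 - (\<Sum>l\<le>i. z l))) ?F"
      using i by (intro eventually_elog_gt[OF _ i(2) rest]) auto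
    with in_Delta show ?thesis
    proof eventually_elim
      case (elim z)
      show ?case using elim(2) rate_term_ge_summands(2)[OF elim(1) i(1)] by (rule less_le_trans)
    qed
  qed
  with in_Delta show ?thesis
  proof eventually_elim
    case (elim z)
    then have "ereal r < rate_term K z i + ereal C"
      by (cases "rate_term K z i") auto
    then show ?case using rate_term_le_rate_S[OF elim(1) i(1)] by (simp add: C_def)
  qed
qed

lemma closedin_rate_S_sublevel:
  "closedin (top_of_set (Delta_simplex K)) {y \<in> Delta_simplex K. rate_S K y \<le> c}"
proof -
  let ?L = "{y \<in> Delta_simplex K. rate_S K y \<le> c}"
  have "eventually (\<lambda>z. z \<in> - ?L) (nhds y)" if y: "y \<in> - ?L" for y
  proof (cases "y \<in> Delta_simplex K")
    case False
    then have "eventually (\<lambda>z. z \<in> - Delta_simplex K) (nhds y)"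
      using closed_Delta_simplex by (intro eventually_nhds_in_open) (auto simp: closed_def)
    then show ?thesis by eventually_elim auto
  next
    case True
    with y have "c < rate_S K y" by auto
    then obtain r where r: "c < ereal r" "ereal r < rate_S K y" using ereal_dense2 by blast
    have "eventually (\<lambda>z. z \<in> Delta_simplex K \<longrightarrow> ereal r < rate_S K z) (nhds y)"
    proof (cases "in_open_simplex K y")
      case True
      show ?thesis using rate_S_lsc_open_simplex[OF True r(2)] by eventually_elim simp
    next
      case False
      show ?thesis
        using rate_S_lsc_boundary[OF \<open>y \<in> Delta_simplex K\<close> False] by (simp add: eventually_inf_principal)
    qed
    then show ?thesis
      by eventually_elim (use r(1) in \<open>auto simp: not_le intro: less_trans\<close>)
  qed
  then have "open (- ?L)"
    unfolding open_subopen[of "- ?L"] eventually_nhds by (meson subsetI)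
  then have "closed ?L" by (simp add: closed_def)
  then show ?thesis by (intro closed_subset) auto
qed


section \<open>The Beta factors\<close>

definition stick_Beta :: "nat \<Rightarrow> real \<Rightarrow> nat \<Rightarrow> real" where
  "stick_Beta K \<theta> i = Beta (\<theta> / real K + 1) (real (K - 1 - i) * \<theta> / real K)"

definition stick_kernel :: "nat \<Rightarrow> real \<Rightarrow> nat \<Rightarrow> real \<Rightarrow> real" where
  "stick_kernel K \<theta> i x = x powr (\<theta> / real K) * (1 - x) powr (real (K - 1 - i) * \<theta> / real K - 1)"

(* The factors with j \<ge> K - 1 do not enter the product measure, but product_prob_space
   needs every factor to be a probability measure, which Beta(a, 0) is not. *)
definition beta_factor :: "nat \<Rightarrow> real \<Rightarrow> nat \<Rightarrow> real measure" where
  "beta_factor K \<theta> j = beta_measure (\<theta> / real K + 1) (real (max 1 (K - 1 - j)) * \<theta> / real K)"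

lemma stick_Beta_pos:
  assumes "0 < \<theta>" "i < K - 1"
  shows "0 < stick_Beta K \<theta> i"
proof -
  have "0 < real K" using assms(2) by simp
  then have "0 < \<theta> / real K + 1" "0 < real (K - 1 - i) * \<theta> / real K"
    using assms by (auto intro!: add_pos_pos divide_pos_pos mult_pos_pos)
  then have "0 < Beta (\<theta> / real K + 1) (real (K - 1 - i) * \<theta> / real K)"
    unfolding Beta_def by (metis Gamma_real_pos add_pos_pos divide_pos_pos mult_pos_pos)
  then show ?thesis by (simp only: stick_Beta_def)
qed

lemma nn_integral_Beta:
  assumes "0 < a" "0 < b"
  shows "(\<integral>\<^sup>+ x. ennreal (indicator {0<..<1} x * (x powr (a - 1) * (1 - x) powr (b - 1))) \<partial>lborel)
           = ennreal (Beta a b)"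
proof -
  have "((\<lambda>t. t powr (a - 1) * (1 - t) powr (b - 1)) has_integral Beta a b) {0<..<1}"
    using has_integral_Beta_real[OF assms] by (simp add: has_integral_Icc_iff_Ioo)
  then show ?thesis by (intro nn_integral_has_integral_lebesgue) auto
qed

lemma nn_integral_indicator_times_const:
  assumes "S \<in> sets M" "0 \<le> C"
  shows "(\<integral>\<^sup>+ x. ennreal (indicator S x * C) \<partial>M) = ennreal C * emeasure M S"
proof -
  have "(\<integral>\<^sup>+ x. ennreal (indicator S x * C) \<partial>M) = (\<integral>\<^sup>+ x. ennreal C * indicator S x \<partial>M)"
    by (intro nn_integral_cong) (auto simp: indicator_def)
  then show ?thesis using assms by (simp add: nn_integral_cmult_indicator)
qed

lemma borel_measurable_beta_density[measurable]: "beta_density a b \<in> borel_measurable borel"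
  unfolding beta_density_def by measurable

lemma beta_density_stick:
  "beta_density (\<theta> / real K + 1) (real (K - 1 - i) * \<theta> / real K) x =
     indicator {0<..<1} x * stick_kernel K \<theta> i x / stick_Beta K \<theta> i"
  by (simp add: beta_density_def stick_kernel_def stick_Beta_def)

lemma prob_space_beta_measure:
  assumes "0 < a" "0 < b"
  shows "prob_space (beta_measure a b)"
proof
  have B: "0 < Beta a b" using assms by (simp add: Beta_def Gamma_real_pos)
  have "emeasure (beta_measure a b) (space (beta_measure a b))
      = (\<integral>\<^sup>+ x. ennreal (indicator {0<..<1} x * (x powr (a - 1) * (1 - x) powr (b - 1))) * ennreal (1 / Beta a b) \<partial>lborel)"
    unfolding beta_measure_def using B
    by (subst emeasure_density)
       (auto simp: beta_density_def ennreal_mult'[symmetric] indicator_def intro!: nn_integral_cong)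
  also have "\<dots> = 1"
    using B by (subst nn_integral_multc) (auto simp: nn_integral_Beta[OF assms] ennreal_mult'[symmetric])
  finally show "emeasure (beta_measure a b) (space (beta_measure a b)) = 1" .
qed

lemma sets_beta_factor[simp]: "sets (beta_factor K \<theta> j) = sets borel"
  by (simp add: beta_factor_def beta_measure_def)

lemma space_beta_factor[simp]: "space (beta_factor K \<theta> j) = UNIV"
  by (simp add: beta_factor_def beta_measure_def)

lemma measurable_beta_factor[simp]:
  "measurable (beta_factor K \<theta> j) N = measurable borel N"
  "measurable M (beta_factor K \<theta> j) = measurable M borel"
  by (rule measurable_cong_sets; simp)+

lemma beta_factor_eq:
  assumes "i < K - 1"
  shows "beta_factor K \<theta> i =
           density lborel (\<lambda>x. ennreal (beta_density (\<theta> / real K + 1) (real (K - 1 - i) * \<theta> / real K) x))"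
proof -
  have "max 1 (K - 1 - i) = K - 1 - i" using assms by simp
  then show ?thesis by (simp only: beta_factor_def beta_measure_def)
qed

lemma prob_space_beta_factor:
  assumes "0 < \<theta>" "0 < K"
  shows "prob_space (beta_factor K \<theta> j)"
  unfolding beta_factor_def using assms
  by (intro prob_space_beta_measure) (auto intro!: add_pos_pos divide_pos_pos mult_pos_pos)

lemma stick_kernel_ge:
  assumes x: "0 < x" "x < 1" and "0 \<le> \<theta>"
  shows "exp (- \<theta> * (stick_rate K i x - stick_rate_const K i)) \<le> stick_kernel K \<theta> i x"
proof -
  have "stick_kernel K \<theta> i x = exp (\<theta> / real K * ln x + (real (K - 1 - i) * \<theta> / real K - 1) * ln (1 - x))"
    using x by (simp add: stick_kernel_def powr_def exp_add)
  moreover have "ln (1 - x) < 0" using x by simp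
  ultimately show ?thesis
    unfolding stick_rate_minus_const[OF x] by (simp add: algebra_simps)
qed

(* The factor exp((\<theta> - K) R) rather than exp(\<theta> R) leaves the integrable weight x (1-x)^(K-2-i). *)
lemma stick_kernel_le:
  assumes x: "0 < x" "x < 1" and i: "i < K - 1"
  shows "stick_kernel K \<theta> i x * exp ((\<theta> - real K) * (stick_rate K i x - stick_rate_const K i)) \<le> 1"
proof -
  have "stick_kernel K \<theta> i x * exp ((\<theta> - real K) * (stick_rate K i x - stick_rate_const K i))
      = exp (\<theta> / real K * ln x + (real (K - 1 - i) * \<theta> / real K - 1) * ln (1 - x)
             + (\<theta> - real K) * (stick_rate K i x - stick_rate_const K i))"
    using x by (simp add: stick_kernel_def powr_def exp_add)
  also have "\<dots> = exp (ln x + (real (K - 1 - i) - 1) * ln (1 - x))"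
    unfolding stick_rate_minus_const[OF x] using i by (simp add: field_simps)
  also have "\<dots> \<le> 1"
  proof -
    have "ln x < 0" "ln (1 - x) < 0" "0 \<le> real (K - 1 - i) - 1" using x i by auto
    then have "ln x + (real (K - 1 - i) - 1) * ln (1 - x) \<le> 0"
      using mult_nonneg_nonpos[of "real (K - 1 - i) - 1" "ln (1 - x)"] by linarith
    then show ?thesis by simp
  qed
  finally show ?thesis .
qed

lemma emeasure_beta_factor_ge:
  assumes \<theta>: "0 < \<theta>" and i: "i < K - 1" and \<delta>: "0 < \<delta>"
    and near: "\<And>x. x \<in> {a - \<delta><..<a + \<delta>} \<Longrightarrow> 0 < x \<and> x < 1 \<and> stick_rate K i x \<le> \<rho>"
  shows "ennreal (2 * \<delta> * exp (- \<theta> * (\<rho> - stick_rate_const K i)) / stick_Beta K \<theta> i)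
           \<le> emeasure (beta_factor K \<theta> i) {a - \<delta><..<a + \<delta>}"
proof -
  let ?I = "{a - \<delta><..<a + \<delta>}"
  let ?c = "exp (- \<theta> * (\<rho> - stick_rate_const K i)) / stick_Beta K \<theta> i"
  have B: "0 < stick_Beta K \<theta> i" by (rule stick_Beta_pos[OF \<theta> i])
  have "ennreal (2 * \<delta> * exp (- \<theta> * (\<rho> - stick_rate_const K i)) / stick_Beta K \<theta> i)
      = (\<integral>\<^sup>+ x. ennreal (indicator ?I x * ?c) \<partial>lborel)"
    using \<delta> B by (subst nn_integral_indicator_times_const) (auto simp: ennreal_mult'[symmetric] field_simps)
  also have "\<dots> \<le> (\<integral>\<^sup>+ x. ennreal (beta_density (\<theta> / real K + 1) (real (K - 1 - i) * \<theta> / real K) x)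
                           * indicator ?I x \<partial>lborel)"
  proof (intro nn_integral_mono)
    fix x :: real
    show "ennreal (indicator ?I x * ?c)
        \<le> ennreal (beta_density (\<theta> / real K + 1) (real (K - 1 - i) * \<theta> / real K) x) * indicator ?I x"
    proof (cases "x \<in> ?I")
      case True
      note x = near[OF True]
      have "exp (- \<theta> * (\<rho> - stick_rate_const K i)) \<le> exp (- \<theta> * (stick_rate K i x - stick_rate_const K i))"
        using x \<theta> by (simp add: mult_left_mono)
      also have "\<dots> \<le> stick_kernel K \<theta> i x"
        using x \<theta> by (intro stick_kernel_ge) auto
      finally show ?thesis
        using True x B unfolding beta_density_stick by (simp add: divide_right_mono ennreal_leI)
    qed simp
  qed
  also have "\<dots> = emeasure (beta_factor K \<theta> i) ?I"
    unfolding beta_factor_eq[OF i] by (subst emeasure_density) auto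
  finally show ?thesis .
qed

(* The weight of the exponential Chebyshev bound; it is infinite outside (0,1), where the
   density vanishes. *)
definition chebyshev_weight :: "nat \<Rightarrow> real \<Rightarrow> nat \<Rightarrow> real \<Rightarrow> ennreal" where
  "chebyshev_weight K \<theta> i x =
     (if 0 < x \<and> x < 1 then ennreal (exp ((\<theta> - real K) * (stick_rate K i x - stick_rate_const K i)))
      else \<top>)"

lemma borel_measurable_chebyshev_weight[measurable]: "chebyshev_weight K \<theta> i \<in> borel_measurable borel"
  unfolding chebyshev_weight_def by measurable

lemma nn_integral_chebyshev_weight_le:
  assumes \<theta>: "0 < \<theta>" and i: "i < K - 1"
  shows "integral\<^sup>N (beta_factor K \<theta> i) (chebyshev_weight K \<theta> i) \<le> ennreal (1 / stick_Beta K \<theta> i)"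
proof -
  have B: "0 < stick_Beta K \<theta> i" by (rule stick_Beta_pos[OF \<theta> i])
  have "integral\<^sup>N (beta_factor K \<theta> i) (chebyshev_weight K \<theta> i)
      = (\<integral>\<^sup>+ x. ennreal (beta_density (\<theta> / real K + 1) (real (K - 1 - i) * \<theta> / real K) x)
                  * chebyshev_weight K \<theta> i x \<partial>lborel)"
    unfolding beta_factor_eq[OF i] by (rule nn_integral_density) simp_all
  also have "\<dots> \<le> (\<integral>\<^sup>+ x. ennreal (indicator {0<..<1::real} x * (1 / stick_Beta K \<theta> i)) \<partial>lborel)"
  proof (intro nn_integral_mono)
    fix x :: real
    show "ennreal (beta_density (\<theta> / real K + 1) (real (K - 1 - i) * \<theta> / real K) x) * chebyshev_weight K \<theta> i x
        \<le> ennreal (indicator {0<..<1::real} x * (1 / stick_Beta K \<theta> i))"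
    proof (cases "0 < x \<and> x < 1")
      case True
      then have "stick_kernel K \<theta> i x * exp ((\<theta> - real K) * (stick_rate K i x - stick_rate_const K i))
          / stick_Beta K \<theta> i \<le> 1 / stick_Beta K \<theta> i"
        using stick_kernel_le[of x i K \<theta>] B i by (intro divide_right_mono) auto
      moreover have "0 \<le> stick_kernel K \<theta> i x / stick_Beta K \<theta> i"
        using B by (simp add: stick_kernel_def)
      ultimately show ?thesis
        using True unfolding beta_density_stick
        by (simp add: chebyshev_weight_def ennreal_mult'[symmetric] ennreal_leI)
    qed (unfold beta_density_stick, simp)
  qed
  also have "\<dots> = ennreal (1 / stick_Beta K \<theta> i)"
    using B by (subst nn_integral_indicator_times_const) auto
  finally show ?thesis .
qed

lemma stick_Beta_le:
  assumes i: "i < K - 1" and \<theta>: "real K \<le> \<theta>"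
  shows "stick_Beta K \<theta> i \<le> exp ((\<theta> - real K) * stick_rate_const K i)"
proof -
  have \<theta>_pos: "0 < \<theta>" using i \<theta> by linarith
  have kernel: "stick_kernel K \<theta> i x \<le> exp ((\<theta> - real K) * stick_rate_const K i)"
    if x: "0 < x" "x < 1" for x
  proof -
    define e where "e = (\<theta> - real K) * (stick_rate K i x - stick_rate_const K i)"
    have "stick_kernel K \<theta> i x = stick_kernel K \<theta> i x * exp e * exp (- e)"
      by (simp add: exp_minus)
    also have "\<dots> \<le> exp (- e)"
      using stick_kernel_le[OF x i, of \<theta>, folded e_def]
      by (intro mult_left_le_one_le) (auto simp: stick_kernel_def)
    also have "\<dots> \<le> exp ((\<theta> - real K) * stick_rate_const K i)"
      using mult_nonneg_nonneg[OF _ stick_rate_nonneg[OF i x], of "\<theta> - real K"] \<theta>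
      by (simp add: e_def algebra_simps)
    finally show ?thesis .
  qed
  have "ennreal (stick_Beta K \<theta> i)
      = (\<integral>\<^sup>+ x. ennreal (indicator {0<..<1} x * stick_kernel K \<theta> i x) \<partial>lborel)"
    using nn_integral_Beta[of "\<theta> / real K + 1" "real (K - 1 - i) * \<theta> / real K"] \<theta>_pos i
    by (simp add: stick_kernel_def stick_Beta_def add_pos_pos)
  also have "\<dots> \<le> (\<integral>\<^sup>+ x. ennreal (indicator {0<..<1::real} x * exp ((\<theta> - real K) * stick_rate_const K i)) \<partial>lborel)"
    using kernel by (intro nn_integral_mono ennreal_leI) (auto simp: indicator_def)
  also have "\<dots> = ennreal (exp ((\<theta> - real K) * stick_rate_const K i))"
    by (subst nn_integral_indicator_times_const) auto
  finally show ?thesis by (subst (asm) ennreal_le_iff) auto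
qed

(* The factor is a probability measure, so the mass bound near the maximiser bounds Beta below. *)
lemma stick_Beta_ge:
  assumes \<theta>: "0 < \<theta>" and i: "i < K - 1" and \<delta>: "0 < \<delta>"
    and near: "\<And>x. x \<in> {a - \<delta><..<a + \<delta>} \<Longrightarrow> 0 < x \<and> x < 1 \<and> stick_rate K i x \<le> \<rho>"
  shows "2 * \<delta> * exp (- \<theta> * (\<rho> - stick_rate_const K i)) \<le> stick_Beta K \<theta> i"
proof -
  interpret prob_space "beta_factor K \<theta> i"
    by (rule prob_space_beta_factor) (use \<theta> i in auto)
  have "ennreal (2 * \<delta> * exp (- \<theta> * (\<rho> - stick_rate_const K i)) / stick_Beta K \<theta> i) \<le> 1"
    using emeasure_beta_factor_ge[OF \<theta> i \<delta> near] emeasure_le_1 by (rule order_trans)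
  then show ?thesis
    using stick_Beta_pos[OF \<theta> i] by (simp add: ennreal_le_iff2 field_simps)
qed

lemma eventually_ln_stick_Beta_ge:
  assumes i: "i < K - 1" and \<epsilon>: "0 < \<epsilon>"
  shows "eventually (\<lambda>\<theta>. \<theta> * (stick_rate_const K i - \<epsilon>) \<le> ln (stick_Beta K \<theta> i)) at_top"
proof -
  define p where "p = 1 / real (K - i)"
  have p: "0 < p" "p < 1" using i by (auto simp: p_def)
  have "eventually (\<lambda>x. 0 < x \<and> x < 1 \<and> stick_rate K i x < \<epsilon> / 2) (nhds p)"
  proof -
    have "eventually (\<lambda>x. 0 < x) (nhds p)" "eventually (\<lambda>x. x < 1) (nhds p)"
      using p by (auto intro: order_tendstoD[OF filterlim_ident])
    moreover have "eventually (\<lambda>x. stick_rate K i x < \<epsilon> / 2) (nhds p)"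
      using stick_rate_at_minimum[OF i] \<epsilon>
      by (intro order_tendstoD[OF tendsto_stick_rate[OF p]]) (auto simp: p_def)
    ultimately show ?thesis by eventually_elim auto
  qed
  then obtain d where d: "d > 0"
    and near: "\<And>x. dist x p < d \<Longrightarrow> 0 < x \<and> x < 1 \<and> stick_rate K i x < \<epsilon> / 2"
    unfolding eventually_nhds_metric by auto
  have main: "ln (2 * d) + \<theta> * (stick_rate_const K i - \<epsilon> / 2) \<le> ln (stick_Beta K \<theta> i)"
    if \<theta>: "\<theta> > 0" for \<theta>
  proof -
    have "0 < x \<and> x < 1 \<and> stick_rate K i x \<le> \<epsilon> / 2" if "x \<in> {p - d<..<p + d}" for x
    proof -
      have "dist x p < d" using that by (auto simp: dist_real_def abs_less_iff)
      then show ?thesis using near by force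
    qed
    then have "2 * d * exp (- \<theta> * (\<epsilon> / 2 - stick_rate_const K i)) \<le> stick_Beta K \<theta> i"
      by (rule stick_Beta_ge[OF \<theta> i d])
    then show ?thesis
      using d stick_Beta_pos[OF \<theta> i]
      by (subst (asm) ln_le_cancel_iff[symmetric]) (auto simp: ln_mult algebra_simps)
  qed
  have "eventually (\<lambda>\<theta>. \<theta> \<ge> max 1 (2 * \<bar>ln (2 * d)\<bar> / \<epsilon>)) at_top" by (rule eventually_ge_at_top)
  then show ?thesis
  proof eventually_elim
    case (elim \<theta>)
    then have "2 * \<bar>ln (2 * d)\<bar> \<le> \<theta> * \<epsilon>" using \<epsilon> by (simp add: field_simps)
    then show ?case using main[of \<theta>] elim by (simp add: algebra_simps)
  qed
qed


section \<open>The law of the stick-breaking vector\<close>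

lemma product_prob_space_beta_factor:
  assumes "0 < \<theta>" "0 < K"
  shows "product_prob_space (beta_factor K \<theta>)"
proof -
  note prob_space_beta_factor[OF assms]
  then show ?thesis
    by (auto simp: product_prob_space_def product_prob_space_axioms_def product_sigma_finite_def
             intro: prob_space_imp_sigma_finite)
qed

lemma law_Y_eq_distr_beta_factor:
  "law_Y K \<theta> = distr (PiM {..<K-1} (beta_factor K \<theta>)) (PiM {..<K-1} (\<lambda>_. borel)) (stick_break K)"
  unfolding law_Y_def
  by (intro arg_cong3[where f=distr] refl PiM_cong) (auto simp: beta_factor_def max_def)

lemma measurable_component_beta_factor[measurable]:
  "i \<in> I \<Longrightarrow> (\<lambda>v. v i) \<in> borel_measurable (PiM I (beta_factor K \<theta>))"
  using measurable_component_singleton[of i I "beta_factor K \<theta>"] by simp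

lemma measurable_stick_break:
  "stick_break K \<in> measurable (PiM {..<K-1} (beta_factor K \<theta>)) (PiM {..<K-1} (\<lambda>_. borel))"
  unfolding stick_break_def by (rule measurable_restrict) auto

lemma prob_space_law_Y:
  assumes "0 < \<theta>" "0 < K"
  shows "prob_space (law_Y K \<theta>)"
  unfolding law_Y_eq_distr_beta_factor
  by (rule prob_space.prob_space_distr[OF prob_space_PiM measurable_stick_break])
     (rule prob_space_beta_factor[OF assms])

lemma indicator_le_chebyshev_weight:
  assumes \<theta>: "real K \<le> \<theta>"
    and F: "\<And>v. v \<in> {..<K-1} \<rightarrow> {0<..<1} \<Longrightarrow> stick_break K v \<in> F \<Longrightarrow>
              t < (\<Sum>i<K-1. stick_rate K i (v i) - stick_rate_const K i)"
  shows "indicator (stick_break K -` F) v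
           \<le> ennreal (exp (- (\<theta> - real K) * t)) * (\<Prod>i<K-1. chebyshev_weight K \<theta> i (v i))"
proof (cases "stick_break K v \<in> F \<and> v \<in> {..<K-1} \<rightarrow> {0<..<1}")
  case True
  let ?E = "\<lambda>i. exp ((\<theta> - real K) * (stick_rate K i (v i) - stick_rate_const K i))"
  have "0 \<le> (\<theta> - real K) * ((\<Sum>i<K-1. stick_rate K i (v i) - stick_rate_const K i) - t)"
    using \<theta> F[of v] True by (intro mult_nonneg_nonneg) auto
  then have "1 \<le> exp (- (\<theta> - real K) * t + (\<theta> - real K) * (\<Sum>i<K-1. stick_rate K i (v i) - stick_rate_const K i))"
    by (simp add: algebra_simps)
  also have "\<dots> = exp (- (\<theta> - real K) * t) * (\<Prod>i<K-1. ?E i)"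
    by (simp add: exp_add exp_sum sum_distrib_left)
  finally have "1 \<le> exp (- (\<theta> - real K) * t) * (\<Prod>i<K-1. ?E i)" .
  moreover have "(\<Prod>i<K-1. chebyshev_weight K \<theta> i (v i)) = ennreal (\<Prod>i<K-1. ?E i)"
    using True by (subst prod_ennreal[symmetric]) (auto simp: chebyshev_weight_def intro!: prod.cong)
  ultimately show ?thesis
    by (simp add: ennreal_mult'[symmetric] indicator_def flip: ennreal_1)
next
  case False
  then have "stick_break K v \<notin> F \<or> (\<Prod>i<K-1. chebyshev_weight K \<theta> i (v i)) = \<top>"
    by (auto simp: ennreal_prod_eq_top chebyshev_weight_def)
  then show ?thesis by (auto simp: ennreal_mult_top)
qed

(* Exponential Chebyshev bound for the independent factors. *)
lemma measure_law_Y_le: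
  assumes K: "K \<ge> 2" and \<theta>: "real K < \<theta>"
    and F: "\<And>v. v \<in> {..<K-1} \<rightarrow> {0<..<1} \<Longrightarrow> stick_break K v \<in> F \<Longrightarrow>
              t < (\<Sum>i<K-1. stick_rate K i (v i) - stick_rate_const K i)"
  shows "measure (law_Y K \<theta>) F \<le> exp (- (\<theta> - real K) * t) * (\<Prod>i<K-1. 1 / stick_Beta K \<theta> i)"
proof -
  have \<theta>_pos: "0 < \<theta>" using \<theta> by linarith
  note B_pos = stick_Beta_pos[OF \<theta>_pos, where K=K]
  define e where "e = exp (- (\<theta> - real K) * t)"
  let ?M = "PiM {..<K-1} (beta_factor K \<theta>)"
  interpret P: product_prob_space "beta_factor K \<theta>"
    by (rule product_prob_space_beta_factor) (use \<theta>_pos K in auto)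
  interpret L: prob_space "law_Y K \<theta>"
    by (rule prob_space_law_Y) (use \<theta>_pos K in auto)
  have rhs_nonneg: "0 \<le> e * (\<Prod>i<K-1. 1 / stick_Beta K \<theta> i)"
    using B_pos by (intro mult_nonneg_nonneg prod_nonneg) (auto simp: e_def intro: less_imp_le)
  show ?thesis
  proof (cases "F \<in> sets (PiM {..<K-1} (\<lambda>_. borel))")
    case True
    let ?A = "stick_break K -` F \<inter> space ?M"
    have "emeasure (law_Y K \<theta>) F = emeasure ?M ?A"
      unfolding law_Y_eq_distr_beta_factor using True by (intro emeasure_distr measurable_stick_break)
    also have "\<dots> = (\<integral>\<^sup>+ v. indicator ?A v \<partial>?M)"
      using measurable_sets[OF measurable_stick_break True] by simp
    also have "\<dots> \<le> (\<integral>\<^sup>+ v. ennreal e * (\<Prod>i<K-1. chebyshev_weight K \<theta> i (v i)) \<partial>?M)"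
    proof (rule nn_integral_mono)
      fix v
      have "indicator ?A v \<le> (indicator (stick_break K -` F) v :: ennreal)"
        by (simp add: indicator_def)
      also have "\<dots> \<le> ennreal e * (\<Prod>i<K-1. chebyshev_weight K \<theta> i (v i))"
        unfolding e_def using \<theta> F by (intro indicator_le_chebyshev_weight) auto
      finally show "indicator ?A v \<le> \<dots>" .
    qed
    also have "\<dots> = ennreal e * (\<integral>\<^sup>+ v. (\<Prod>i<K-1. chebyshev_weight K \<theta> i (v i)) \<partial>?M)"
      by (rule nn_integral_cmult) measurable
    also have "\<dots> = ennreal e * (\<Prod>i<K-1. integral\<^sup>N (beta_factor K \<theta> i) (chebyshev_weight K \<theta> i))"
      by (simp add: P.product_nn_integral_prod)
    also have "\<dots> \<le> ennreal e * (\<Prod>i<K-1. ennreal (1 / stick_Beta K \<theta> i))"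
      using nn_integral_chebyshev_weight_le[OF \<theta>_pos] by (intro mult_left_mono prod_mono_ennreal) auto
    also have "\<dots> = ennreal (e * (\<Prod>i<K-1. 1 / stick_Beta K \<theta> i))"
      using B_pos by (subst prod_ennreal) (auto simp: ennreal_mult' e_def intro: less_imp_le)
    finally show ?thesis
      using rhs_nonneg unfolding e_def L.emeasure_eq_measure by (simp add: ennreal_le_iff)
  qed (use rhs_nonneg in \<open>simp add: e_def law_Y_eq_distr_beta_factor measure_notin_sets\<close>)
qed

lemma measure_law_Y_ge:
  assumes K: "K \<ge> 2" and \<theta>: "0 < \<theta>" and G: "G \<in> sets (PiM {..<K-1} (\<lambda>_. borel))" and \<delta>: "0 < \<delta>"
    and box: "\<And>w. w \<in> PiE {..<K-1} (\<lambda>i. {v i - \<delta><..<v i + \<delta>}) \<Longrightarrow> stick_break K w \<in> G"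
    and near: "\<And>i x. i < K - 1 \<Longrightarrow> x \<in> {v i - \<delta><..<v i + \<delta>} \<Longrightarrow>
                 0 < x \<and> x < 1 \<and> stick_rate K i x \<le> \<rho> i"
  shows "(\<Prod>i<K-1. 2 * \<delta> * exp (- \<theta> * (\<rho> i - stick_rate_const K i)) / stick_Beta K \<theta> i)
           \<le> measure (law_Y K \<theta>) G"
proof -
  let ?M = "PiM {..<K-1} (beta_factor K \<theta>)"
  let ?I = "\<lambda>i. {v i - \<delta><..<v i + \<delta>}"
  interpret P: product_prob_space "beta_factor K \<theta>"
    by (rule product_prob_space_beta_factor) (use \<theta> K in auto)
  interpret L: prob_space "law_Y K \<theta>"
    by (rule prob_space_law_Y) (use \<theta> K in auto)
  have "ennreal (\<Prod>i<K-1. 2 * \<delta> * exp (- \<theta> * (\<rho> i - stick_rate_const K i)) / stick_Beta K \<theta> i)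
      = (\<Prod>i<K-1. ennreal (2 * \<delta> * exp (- \<theta> * (\<rho> i - stick_rate_const K i)) / stick_Beta K \<theta> i))"
    using stick_Beta_pos[OF \<theta>] \<delta> by (intro prod_ennreal[symmetric]) (auto intro!: divide_nonneg_pos)
  also have "\<dots> \<le> (\<Prod>i<K-1. emeasure (beta_factor K \<theta> i) (?I i))"
    using emeasure_beta_factor_ge[OF \<theta> _ \<delta> near] by (intro prod_mono_ennreal) auto
  also have "\<dots> = emeasure ?M (PiE {..<K-1} ?I)"
    by (rule P.emeasure_PiM[symmetric]) auto
  also have "\<dots> \<le> emeasure ?M (stick_break K -` G \<inter> space ?M)"
    using box G by (intro emeasure_mono measurable_sets[OF measurable_stick_break])
                   (auto simp: space_PiM PiE_iff)
  also have "\<dots> = emeasure (law_Y K \<theta>) G"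
    unfolding law_Y_eq_distr_beta_factor using G by (intro emeasure_distr[symmetric] measurable_stick_break)
  finally show ?thesis unfolding L.emeasure_eq_measure by (simp add: ennreal_le_iff)
qed

lemma sets_PiM_lessThan_of_borel:
  assumes "S \<in> sets (borel :: (nat \<Rightarrow> real) measure)" "S \<subseteq> extensional {..<n}"
  shows "S \<in> sets (PiM {..<n} (\<lambda>_. borel :: real measure))"
proof -
  have "(\<lambda>x. x) \<in> measurable (PiM {..<n} (\<lambda>_. borel :: real measure)) (PiM UNIV (\<lambda>_. borel :: real measure))"
  proof (rule measurable_PiM_single')
    fix i :: nat
    show "(\<lambda>\<omega>. \<omega> i) \<in> measurable (PiM {..<n} (\<lambda>_. borel)) (borel :: real measure)"
    proof (cases "i < n")
      case False
      then have "\<And>\<omega>. \<omega> \<in> space (PiM {..<n} (\<lambda>_. borel :: real measure)) \<Longrightarrow> \<omega> i = undefined"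
        by (auto simp: space_PiM PiE_def extensional_def)
      then show ?thesis by (subst measurable_cong[where g="\<lambda>_. undefined"]) auto
    qed simp
  qed (auto simp: space_PiM)
  then have "(\<lambda>x. x) -` S \<inter> space (PiM {..<n} (\<lambda>_. borel :: real measure)) \<in> sets (PiM {..<n} (\<lambda>_. borel))"
    by (rule measurable_sets) (simp add: sets_PiM_equal_borel assms(1))
  moreover have "(\<lambda>x. x) -` S \<inter> space (PiM {..<n} (\<lambda>_. borel :: real measure)) = S"
    using assms(2) by (auto simp: space_PiM PiE_def)
  ultimately show ?thesis by simp
qed

lemma sets_openin_Delta_simplex:
  assumes "openin (top_of_set (Delta_simplex K)) G"
  shows "G \<in> sets (PiM {..<K-1} (\<lambda>_. borel :: real measure))"
proof -
  obtain U where U: "open U" "G = Delta_simplex K \<inter> U" using assms by (auto simp: openin_open)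
  show ?thesis unfolding U(2) using closed_Delta_simplex U(1)
    by (intro sets_PiM_lessThan_of_borel sets.Int borel_closed borel_open) (auto simp: Delta_simplex_def)
qed


section \<open>The large deviation bounds\<close>

lemma ln_prod_inverse:
  assumes "finite A" "\<And>i. i \<in> A \<Longrightarrow> 0 < f i"
  shows "ln (\<Prod>i\<in>A. 1 / f i) = - (\<Sum>i\<in>A. ln (f i :: real))"
proof -
  have "ln (\<Prod>i\<in>A. 1 / f i) = (\<Sum>i\<in>A. ln (1 / f i))"
    using assms by (intro ln_prod) (auto simp: less_imp_neq[symmetric])
  also have "\<dots> = (\<Sum>i\<in>A. - ln (f i))"
    using assms(2) by (intro sum.cong) (auto simp: ln_div)
  finally show ?thesis by (simp add: sum_negf)
qed

lemma log_prob_law_Y_le: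
  assumes K: "K \<ge> 2" and \<theta>: "real K < \<theta>"
    and F: "\<And>v. v \<in> {..<K-1} \<rightarrow> {0<..<1} \<Longrightarrow> stick_break K v \<in> F \<Longrightarrow>
              t < (\<Sum>i<K-1. stick_rate K i (v i) - stick_rate_const K i)"
  shows "log_prob (measure (law_Y K \<theta>) F)
           \<le> ereal (- (\<theta> - real K) * t - (\<Sum>i<K-1. ln (stick_Beta K \<theta> i)))"
proof -
  define m where "m = measure (law_Y K \<theta>) F"
  define P where "P = (\<Prod>i<K-1. 1 / stick_Beta K \<theta> i)"
  have \<theta>_pos: "0 < \<theta>" using \<theta> by linarith
  note B_pos = stick_Beta_pos[OF \<theta>_pos, where K=K]
  have P_pos: "0 < P" unfolding P_def using B_pos by (intro prod_pos) simp
  have ln_P: "ln P = - (\<Sum>i<K-1. ln (stick_Beta K \<theta> i))"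
    unfolding P_def using B_pos by (intro ln_prod_inverse) auto
  have m_le: "m \<le> exp (- (\<theta> - real K) * t) * P"
    unfolding m_def P_def using F by (intro measure_law_Y_le[OF K \<theta>]) auto
  show ?thesis
  proof (cases "m = 0")
    case False
    then have "0 < m" unfolding m_def using measure_nonneg[of "law_Y K \<theta>" F] by linarith
    then have "ln m \<le> ln (exp (- (\<theta> - real K) * t) * P)"
      using m_le P_pos by (subst ln_le_cancel_iff) auto
    also have "\<dots> = - (\<theta> - real K) * t - (\<Sum>i<K-1. ln (stick_Beta K \<theta> i))"
      using P_pos by (simp add: ln_mult ln_P)
    finally show ?thesis using False by (simp add: log_prob_def m_def)
  qed (simp add: log_prob_def m_def)
qed

lemma eventually_log_prob_law_Y_le:
  assumes K: "K \<ge> 2" and F: "F \<subseteq> Delta_simplex K" and r: "ereal r < (INF y\<in>F. rate_S K y)"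
    and \<epsilon>: "0 < \<epsilon>"
  shows "eventually (\<lambda>\<theta>. log_prob (measure (law_Y K \<theta>) F) / ereal \<theta> \<le> ereal (- r + \<epsilon>)) at_top"
proof -
  define C where "C = (\<Sum>i<K-1. stick_rate_const K i)"
  define t where "t = r - C"
  define \<epsilon>' where "\<epsilon>' = \<epsilon> / (2 * real K)"
  have \<epsilon>': "\<epsilon>' > 0" "real (K - 1) * \<epsilon>' \<le> \<epsilon> / 2"
    using \<epsilon> K by (auto simp: \<epsilon>'_def field_simps)
  have t: "t < (\<Sum>i<K-1. stick_rate K i (v i) - stick_rate_const K i)"
    if v: "v \<in> {..<K-1} \<rightarrow> {0<..<1}" and "stick_break K v \<in> F" for v
  proof -
    have "ereal r < rate_S K (stick_break K v)"
      using r INF_lower[OF \<open>stick_break K v \<in> F\<close>, of "rate_S K"] by (rule less_le_trans)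
    then show ?thesis using rate_S_stick_break[OF v] by (simp add: t_def C_def sum_subtractf)
  qed
  have "eventually (\<lambda>\<theta>. \<forall>i\<in>{..<K-1}. \<theta> * (stick_rate_const K i - \<epsilon>') \<le> ln (stick_Beta K \<theta> i)) at_top"
    using eventually_ln_stick_Beta_ge \<epsilon>' by (intro eventually_ball_finite) auto
  moreover have "eventually (\<lambda>\<theta>. max (real K + 1) (2 * real K * \<bar>t\<bar> / \<epsilon>) \<le> \<theta>) at_top"
    by (rule eventually_ge_at_top)
  ultimately show ?thesis
  proof eventually_elim
    case (elim \<theta>)
    have \<theta>: "real K < \<theta>" "0 < \<theta>" using elim K by auto
    have "log_prob (measure (law_Y K \<theta>) F) \<le> ereal (- (\<theta> - real K) * t - (\<Sum>i<K-1. ln (stick_Beta K \<theta> i)))"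
      using t by (intro log_prob_law_Y_le[OF K \<theta>(1)]) auto
    also have "\<dots> \<le> ereal (\<theta> * (- r + \<epsilon>))"
    proof -
      have "- (\<theta> - real K) * t - (\<Sum>i<K-1. ln (stick_Beta K \<theta> i))
          \<le> - (\<theta> - real K) * t - (\<Sum>i<K-1. \<theta> * (stick_rate_const K i - \<epsilon>'))"
        using elim by (intro diff_left_mono sum_mono) auto
      also have "\<dots> = - \<theta> * r + real K * t + \<theta> * (real (K - 1) * \<epsilon>')"
        by (simp add: t_def C_def sum_distrib_left[symmetric] sum_subtractf algebra_simps)
      also have "\<dots> \<le> \<theta> * (- r + \<epsilon>)"
      proof -
        have "2 * real K * \<bar>t\<bar> \<le> \<theta> * \<epsilon>" using elim \<epsilon> by (simp add: field_simps)
        moreover have "real K * t \<le> real K * \<bar>t\<bar>" by (intro mult_left_mono) auto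
        moreover have "\<theta> * (real (K - 1) * \<epsilon>') \<le> \<theta> * (\<epsilon> / 2)"
          using \<epsilon>' \<theta> by (intro mult_left_mono) auto
        ultimately show ?thesis by (simp add: algebra_simps)
      qed
      finally show ?thesis by simp
    qed
    finally show ?case using \<theta> by (simp add: ereal_divide_le_pos)
  qed
qed

lemma eventually_nhds_fun_imp_box:
  assumes "eventually P (nhds (v :: 'a \<Rightarrow> real))"
  shows "\<exists>r>0. \<forall>w. (\<forall>i. \<bar>w i - v i\<bar> < r) \<longrightarrow> P w"
proof -
  obtain S where S: "open S" "v \<in> S" "\<And>w. w \<in> S \<Longrightarrow> P w" using assms unfolding eventually_nhds by auto
  have "openin (product_topology (\<lambda>i. euclidean) UNIV) S" using S(1) by (simp add: open_fun_def)
  from product_topology_open_contains_basis[OF this S(2)]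
  obtain X where X: "v \<in> PiE UNIV X" "\<And>i. open (X i)" "finite {i. X i \<noteq> UNIV}" "PiE UNIV X \<subseteq> S"
    by auto
  define J where "J = {i. X i \<noteq> UNIV}"
  have "\<forall>i\<in>J. \<exists>e>0. ball (v i) e \<subseteq> X i"
    using X(1,2) by (auto simp: PiE_def intro: openE)
  then obtain R where R: "\<And>i. i \<in> J \<Longrightarrow> R i > 0 \<and> ball (v i) (R i) \<subseteq> X i" by metis
  define r where "r = Min (insert 1 (R ` J))"
  have J: "finite J" using X(3) by (simp add: J_def)
  have r: "r > 0" "\<And>i. i \<in> J \<Longrightarrow> r \<le> R i"
    unfolding r_def using J R by (auto simp: Min_gr_iff)
  have "P w" if w: "\<forall>i. \<bar>w i - v i\<bar> < r" for w
  proof -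
    have "w i \<in> X i" for i
    proof (cases "i \<in> J")
      case True
      then have "w i \<in> ball (v i) (R i)"
        using w[rule_format, of i] r(2)[OF True] by (auto simp: dist_real_def abs_minus_commute[of "v i"])
      then show ?thesis using R[OF True] by auto
    qed (simp add: J_def)
    then show ?thesis using X(4) S(3) by (auto simp: PiE_def)
  qed
  then show ?thesis using r(1) by blast
qed

lemma eventually_stick_rate_component_lt:
  assumes "0 < v i" "v i < 1" "0 < e"
  shows "eventually (\<lambda>w. 0 < w i \<and> w i < 1 \<and> stick_rate K i (w i) < stick_rate K i (v i) + e) (nhds v)"
proof -
  have "isCont (stick_rate K i) (v i)"
    using tendsto_stick_rate[OF assms(1,2), of K i] by (simp add: isCont_def tendsto_at_iff_tendsto_nhds)
  then have "((\<lambda>w. stick_rate K i (w i)) \<longlongrightarrow> stick_rate K i (v i)) (nhds v)"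
    by (rule isCont_tendsto_compose[OF _ tendsto_component])
  then have "eventually (\<lambda>w. stick_rate K i (w i) < stick_rate K i (v i) + e) (nhds v)"
    using assms by (intro order_tendstoD) auto
  moreover have "eventually (\<lambda>w. 0 < w i) (nhds v)" "eventually (\<lambda>w. w i < 1) (nhds v)"
    using assms by (auto intro: order_tendstoD[OF tendsto_component])
  ultimately show ?thesis by eventually_elim auto
qed

lemma stick_break_box_in_open:
  assumes G: "openin (top_of_set (Delta_simplex K)) G"
    and v: "v \<in> {..<K-1} \<rightarrow>\<^sub>E {0<..<1}" "stick_break K v \<in> G" and \<epsilon>': "0 < \<epsilon>'"
  obtains r where "r > 0" "\<And>w. w \<in> PiE {..<K-1} (\<lambda>i. {v i - r<..<v i + r}) \<Longrightarrow> stick_break K w \<in> G"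
    "\<And>i x. i < K - 1 \<Longrightarrow> x \<in> {v i - r<..<v i + r} \<Longrightarrow>
       0 < x \<and> x < 1 \<and> stick_rate K i x \<le> stick_rate K i (v i) + \<epsilon>'"
proof -
  obtain U where U: "open U" "G = Delta_simplex K \<inter> U" using G by (auto simp: openin_open)
  have "(stick_break K \<longlongrightarrow> stick_break K v) (nhds v)"
    using continuous_on_stick_break[of K] by (simp add: continuous_on_def tendsto_at_iff_tendsto_nhds)
  then have "eventually (\<lambda>w. stick_break K w \<in> U) (nhds v)"
    by (rule topological_tendstoD) (use U v(2) in auto)
  moreover have "eventually (\<lambda>w. \<forall>i\<in>{..<K-1}. 0 < w i \<and> w i < 1 \<and>
      stick_rate K i (w i) < stick_rate K i (v i) + \<epsilon>') (nhds v)"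
  proof (rule eventually_ball_finite)
    show "\<forall>i\<in>{..<K-1}. eventually (\<lambda>w. 0 < w i \<and> w i < 1 \<and>
        stick_rate K i (w i) < stick_rate K i (v i) + \<epsilon>') (nhds v)"
      using PiE_mem[OF v(1)] \<epsilon>' by (auto intro!: eventually_stick_rate_component_lt)
  qed simp
  ultimately have "\<exists>r>0. \<forall>w. (\<forall>i. \<bar>w i - v i\<bar> < r) \<longrightarrow> stick_break K w \<in> U \<and>
      (\<forall>i\<in>{..<K-1}. 0 < w i \<and> w i < 1 \<and> stick_rate K i (w i) < stick_rate K i (v i) + \<epsilon>')"
    by (intro eventually_nhds_fun_imp_box eventually_conj)
  then obtain r where r: "r > 0" and near: "\<And>w. \<forall>i. \<bar>w i - v i\<bar> < r \<Longrightarrow> stick_break K w \<in> U \<and>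
      (\<forall>i\<in>{..<K-1}. 0 < w i \<and> w i < 1 \<and> stick_rate K i (w i) < stick_rate K i (v i) + \<epsilon>')"
    by blast
  show ?thesis
  proof (rule that[OF r])
    fix w assume w: "w \<in> PiE {..<K-1} (\<lambda>i. {v i - r<..<v i + r})"
    have "\<bar>w i - v i\<bar> < r" for i
    proof (cases "i < K - 1")
      case True
      then show ?thesis using PiE_mem[OF w, of i] by (simp add: abs_less_iff)
    next
      case False
      \<comment> \<open>Outside \<open>{..<K-1}\<close> both \<open>w\<close> and \<open>v\<close> take the value \<open>undefined\<close>.\<close>
      then have "w i = v i" using w v(1) by (auto simp: PiE_def extensional_def)
      then show ?thesis using r by simp
    qed
    then have "stick_break K w \<in> U" "w \<in> {..<K-1} \<rightarrow> {0<..<1}"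
      using near[of w] by auto
    then show "stick_break K w \<in> G"
      using stick_break_open_simplex(1) U(2) by blast
  next
    fix i x assume i: "i < K - 1" and x: "x \<in> {v i - r<..<v i + r}"
    have "\<forall>j. \<bar>(v(i := x)) j - v j\<bar> < r" using x r by (auto simp: abs_less_iff)
    then have "0 < (v(i := x)) i \<and> (v(i := x)) i < 1 \<and> stick_rate K i ((v(i := x)) i) < stick_rate K i (v i) + \<epsilon>'"
      using near i by blast
    then show "0 < x \<and> x < 1 \<and> stick_rate K i x \<le> stick_rate K i (v i) + \<epsilon>'" by simp
  qed
qed

lemma log_prob_law_Y_ge:
  assumes K: "K \<ge> 2" and \<theta>: "real K \<le> \<theta>" and G: "G \<in> sets (PiM {..<K-1} (\<lambda>_. borel))"
    and \<delta>: "0 < \<delta>"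
    and box: "\<And>w. w \<in> PiE {..<K-1} (\<lambda>i. {v i - \<delta><..<v i + \<delta>}) \<Longrightarrow> stick_break K w \<in> G"
    and near: "\<And>i x. i < K - 1 \<Longrightarrow> x \<in> {v i - \<delta><..<v i + \<delta>} \<Longrightarrow>
                 0 < x \<and> x < 1 \<and> stick_rate K i x \<le> \<rho> i"
  shows "ereal (\<Sum>i<K-1. ln (2 * \<delta>) - \<theta> * \<rho> i + real K * stick_rate_const K i)
           \<le> log_prob (measure (law_Y K \<theta>) G)"
proof -
  have \<theta>_pos: "0 < \<theta>" using K \<theta> by linarith
  note B_pos = stick_Beta_pos[OF \<theta>_pos, where K=K]
  let ?q = "\<lambda>i. 2 * \<delta> * exp (- \<theta> * (\<rho> i - stick_rate_const K i)) / stick_Beta K \<theta> i"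
  define m where "m = measure (law_Y K \<theta>) G"
  have q_pos: "0 < ?q i" if "i < K - 1" for i using B_pos[OF that] \<delta> by simp
  have m_ge: "(\<Prod>i<K-1. ?q i) \<le> m"
    unfolding m_def by (rule measure_law_Y_ge[OF K \<theta>_pos G \<delta> box near])
  have Q_pos: "0 < (\<Prod>i<K-1. ?q i)" using q_pos by (intro prod_pos) simp
  with m_ge have m_pos: "0 < m" by linarith
  have "(\<Sum>i<K-1. ln (2 * \<delta>) - \<theta> * \<rho> i + real K * stick_rate_const K i) \<le> (\<Sum>i<K-1. ln (?q i))"
  proof (rule sum_mono)
    fix i assume "i \<in> {..<K-1}"
    then have i: "i < K - 1" by simp
    have "ln (stick_Beta K \<theta> i) \<le> ln (exp ((\<theta> - real K) * stick_rate_const K i))"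
      using stick_Beta_le[OF i \<theta>] B_pos[OF i] by (subst ln_le_cancel_iff) auto
    then show "ln (2 * \<delta>) - \<theta> * \<rho> i + real K * stick_rate_const K i \<le> ln (?q i)"
      using \<delta> B_pos[OF i] by (simp add: ln_div ln_mult algebra_simps)
  qed
  also have "\<dots> = ln (\<Prod>i<K-1. ?q i)"
  proof (rule ln_prod[symmetric])
    fix i assume "i \<in> {..<K-1}"
    then have "0 < ?q i" by (intro q_pos) simp
    then show "?q i \<noteq> 0" by linarith
  qed simp
  also have "\<dots> \<le> ln m"
    using m_ge Q_pos m_pos by simp
  finally show ?thesis using m_pos by (simp add: log_prob_def m_def)
qed

lemma eventually_log_prob_law_Y_ge:
  assumes K: "K \<ge> 2" and G: "openin (top_of_set (Delta_simplex K)) G" and y: "y \<in> G"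
    and J: "rate_S K y = ereal J" and \<epsilon>: "0 < \<epsilon>"
  shows "eventually (\<lambda>\<theta>. ereal (- J - \<epsilon>) \<le> log_prob (measure (law_Y K \<theta>) G) / ereal \<theta>) at_top"
proof -
  have y_Delta: "y \<in> Delta_simplex K" using openin_imp_subset[OF G] y by auto
  then have "in_open_simplex K y" using rate_S_boundary[OF y_Delta] J by force
  then obtain v where v: "v \<in> {..<K-1} \<rightarrow>\<^sub>E {0<..<1}" "stick_break K v = y"
    using stick_break_onto_open_simplex[OF y_Delta] by blast
  have J_eq: "J = (\<Sum>i<K-1. stick_rate K i (v i))"
    using rate_S_stick_break[of v K] v J by (auto simp: PiE_iff)
  define \<epsilon>' where "\<epsilon>' = \<epsilon> / (2 * real K)"
  have \<epsilon>': "\<epsilon>' > 0" "real (K - 1) * \<epsilon>' \<le> \<epsilon> / 2"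
    using \<epsilon> K by (auto simp: \<epsilon>'_def field_simps)
  obtain r where r: "r > 0"
    and box: "\<And>w. w \<in> PiE {..<K-1} (\<lambda>i. {v i - r<..<v i + r}) \<Longrightarrow> stick_break K w \<in> G"
    and near: "\<And>i x. i < K - 1 \<Longrightarrow> x \<in> {v i - r<..<v i + r} \<Longrightarrow>
       0 < x \<and> x < 1 \<and> stick_rate K i x \<le> stick_rate K i (v i) + \<epsilon>'"
    using stick_break_box_in_open[OF G v(1) _ \<epsilon>'(1)] v(2) y by blast
  define D where "D = real (K - 1) * ln (2 * r) + real K * (\<Sum>i<K-1. stick_rate_const K i)"
  have "eventually (\<lambda>\<theta>. max (real K) (2 * \<bar>D\<bar> / \<epsilon>) \<le> \<theta>) at_top"
    by (rule eventually_ge_at_top)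
  then show ?thesis
  proof eventually_elim
    case (elim \<theta>)
    have \<theta>: "real K \<le> \<theta>" "0 < \<theta>" using elim K by auto
    have "ereal (\<theta> * (- J - \<epsilon>))
        \<le> ereal (\<Sum>i<K-1. ln (2 * r) - \<theta> * (stick_rate K i (v i) + \<epsilon>') + real K * stick_rate_const K i)"
    proof -
      have "(\<Sum>i<K-1. ln (2 * r) - \<theta> * (stick_rate K i (v i) + \<epsilon>') + real K * stick_rate_const K i)
          = D - \<theta> * J - \<theta> * (real (K - 1) * \<epsilon>')"
        by (simp add: D_def J_eq sum.distrib sum_subtractf sum_distrib_left[symmetric] algebra_simps)
      moreover have "\<theta> * (real (K - 1) * \<epsilon>') \<le> \<theta> * (\<epsilon> / 2)"
        using \<epsilon>' \<theta> by (intro mult_left_mono) auto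
      moreover have "2 * \<bar>D\<bar> \<le> \<theta> * \<epsilon>" using elim \<epsilon> by (simp add: field_simps)
      ultimately show ?thesis by (simp add: algebra_simps)
    qed
    also have "\<dots> \<le> log_prob (measure (law_Y K \<theta>) G)"
      by (rule log_prob_law_Y_ge[OF K \<theta>(1) sets_openin_Delta_simplex[OF G] r box near])
    finally show ?case using \<theta> by (simp add: ereal_le_divide_pos)
  qed
qed

lemma Limsup_le_uminus:
  fixes X :: ereal and f :: "'a \<Rightarrow> ereal"
  assumes "\<And>r \<epsilon>. ereal r < X \<Longrightarrow> 0 < \<epsilon> \<Longrightarrow> eventually (\<lambda>x. f x \<le> ereal (- r + \<epsilon>)) F"
  shows "Limsup F f \<le> - X"
proof (rule ccontr)
  assume "\<not> Limsup F f \<le> - X"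
  then obtain q q' where q: "- X < ereal q'" "ereal q' < ereal q" "ereal q < Limsup F f"
    using ereal_dense2 by (metis not_le)
  then have "ereal (- q') < X" by (metis ereal_uminus_less_reorder uminus_ereal.simps(1))
  then have "Limsup F f \<le> ereal q"
    using assms[of "- q'" "q - q'"] q(2) by (intro Limsup_bounded) simp
  then show False using q(3) by simp
qed


lemma uminus_INF_le_Liminf:
  fixes I f :: "_ \<Rightarrow> ereal"
  assumes nonneg: "\<And>y. y \<in> A \<Longrightarrow> 0 \<le> I y"
    and ev: "\<And>y J \<epsilon>. y \<in> A \<Longrightarrow> I y = ereal J \<Longrightarrow> 0 < \<epsilon> \<Longrightarrow> eventually (\<lambda>x. ereal (- J - \<epsilon>) \<le> f x) F"
  shows "- (INF y\<in>A. I y) \<le> Liminf F f"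
proof -
  have "- I y \<le> Liminf F f" if y: "y \<in> A" for y
  proof (cases "I y")
    case (real J)
    have "ereal (- J) \<le> Liminf F f + ereal \<epsilon>" if "0 < \<epsilon>" for \<epsilon>
    proof -
      have "ereal (- J - \<epsilon>) \<le> Liminf F f"
        by (intro Liminf_bounded ev[OF y real that])
      then show ?thesis by (metis add_right_mono diff_add_cancel plus_ereal.simps(1))
    qed
    then show ?thesis using real by (auto intro: ereal_le_epsilon2)
  qed (use nonneg[OF y] in auto)
  then have "- Liminf F f \<le> (INF y\<in>A. I y)"
    by (intro INF_greatest) (simp add: ereal_uminus_le_reorder)
  then show ?thesis by (simp add: ereal_uminus_le_reorder)
qed


theorem lemma2p4:
  fixes K :: nat
  assumes "K \<ge> 2"
  shows "LDP (Delta_simplex K) (law_Y K) (rate_S K)"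
  unfolding LDP_def
proof (intro conjI allI impI ballI rate_S_nonneg closedin_rate_S_sublevel)
  fix F assume "closedin (top_of_set (Delta_simplex K)) F"
  then show "Limsup at_top (\<lambda>\<theta>. log_prob (measure (law_Y K \<theta>) F) / ereal \<theta>) \<le> - (INF x\<in>F. rate_S K x)"
    by (intro Limsup_le_uminus eventually_log_prob_law_Y_le[OF assms]) (auto dest: closedin_imp_subset)
next
  fix G assume G: "openin (top_of_set (Delta_simplex K)) G"
  then show "- (INF x\<in>G. rate_S K x) \<le> Liminf at_top (\<lambda>\<theta>. log_prob (measure (law_Y K \<theta>) G) / ereal \<theta>)"
    by (intro uminus_INF_le_Liminf rate_S_nonneg eventually_log_prob_law_Y_ge[OF assms])
       (auto dest: openin_imp_subset)
qed

end
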